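(* Let $(x_n)_{n\ge0}$ be an infinite path in $\Gamma$ with $\ell(x_n)=n$, let $z$ be nonreal, and let $v_z,u_z:\Gamma\to\mathbb C$ satisfy $v_z(x_0)=1$, $v_z(x_1)=(z-\beta_{x_0})/\lambda_{x_0}$, $u_z(x_0)=0$, $u_z(x_1)=1/\lambda_{x_0}$, and $(Jv_z)(x)=zv_z(x)$, $(Ju_z)(x)=zu_z(x)$ for all $x\in\Gamma\setminus\{x_0\}$. Then for every $n\ge0$, $$v_z(x_n)u_z(x_{n+1})-u_z(x_n)v_z(x_{n+1})=\frac{1}{\lambda_{x_n}}.$$
   Context: Let $\Gamma$ be an infinite connected tree whose vertices are arranged in levels $\ell(x)\in\{0,1,2,\dots\}$: every vertex $x$ is adjacent to exactly one vertex $x'$ with $\ell(x')=\ell(x)+1$; for $\ell(x)\ge 1$ the set $N_x=\{y:\ y'=x\}$ of neighbours of $x$ on level $\ell(x)-1$ is finite and nonempty; $N_x=\emptyset$ if $\ell(x)=0$; there are no other edges. Fix $\lambda_x>0$, $\beta_x\in\mathbb R$. The Jacobi matrix $J$ acts on functions $v:\Gamma\to\mathbb C$ by $(Jv)(x)=\lambda_x v(x')+\beta_x v(x)+\sum_{y\in N_x}\lambda_y v(y)$. *)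

theory Defs
  imports Complex_Main
begin

text \<open>A levelled tree: the vertex set is the type 'v; lev x is the level of x and
 par x is the unique neighbour x' of x on level lev x + 1.\<close>

definition children :: "('v \<Rightarrow> 'v) \<Rightarrow> 'v \<Rightarrow> 'v set" where
  "children par x = {y. par y = x}"

definition adjacent :: "('v \<Rightarrow> 'v) \<Rightarrow> 'v \<Rightarrow> 'v \<Rightarrow> bool" where
  "adjacent par x y \<longleftrightarrow> par x = y \<or> par y = x"

definition level_tree :: "('v \<Rightarrow> nat) \<Rightarrow> ('v \<Rightarrow> 'v) \<Rightarrow> bool" where
  "level_tree lev par \<longleftrightarrow>
     infinite (UNIV :: 'v set) \<and>
     (\<forall>x. lev (par x) = lev x + 1) \<and>
     (\<forall>x. lev x \<ge> 1 \<longrightarrow> finite (children par x) \<and> children par x \<noteq> {}) \<and>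
     (\<forall>x. lev x = 0 \<longrightarrow> children par x = {}) \<and>
     (\<forall>x y. \<exists>m k. (par ^^ m) x = (par ^^ k) y)"

definition jacobi :: "('v \<Rightarrow> 'v) \<Rightarrow> ('v \<Rightarrow> real) \<Rightarrow> ('v \<Rightarrow> real) \<Rightarrow> ('v \<Rightarrow> complex) \<Rightarrow> 'v \<Rightarrow> complex" where
  "jacobi par lam beta v x =
     of_real (lam x) * v (par x) + of_real (beta x) * v x
     + (\<Sum>y\<in>children par x. of_real (lam y) * v y)"

end

theory Submission
  imports Defs
begin

text \<open>Write \<open>W(x) = v(x) u(x') - u(x) v(x')\<close> for the Wronskian across the edge from \<open>x\<close> to its
  parent \<open>x'\<close>. Subtracting \<open>u(x)\<close> times the eigenvalue equation for \<open>v\<close> at \<open>x\<close> from \<open>v(x)\<close> times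
  the one for \<open>u\<close> gives the conservation law \<open>\<lambda>\<^sub>x W(x) = \<Sum>\<^sub>y\<^sub>\<in>\<^sub>N\<^sub>x \<lambda>\<^sub>y W(y)\<close> at every \<open>x \<noteq> x\<^sub>0\<close>.
  By induction on the level, \<open>W\<close> vanishes at every vertex off the path, since the whole subtree
  below such a vertex avoids \<open>x\<^sub>0\<close>. Along the path only the child \<open>x\<^sub>n\<close> of \<open>x\<^sub>n\<^sub>+\<^sub>1\<close> contributes, so
  \<open>\<lambda>\<^sub>x\<^sub>n W(x\<^sub>n)\<close> is independent of \<open>n\<close>, and it equals \<open>1\<close> at \<open>n = 0\<close> by the initial values.
  Neither \<open>Im z \<noteq> 0\<close> nor the value of \<open>v(x\<^sub>1)\<close> is needed.\<close>

definition wronskian :: "('v \<Rightarrow> 'v) \<Rightarrow> ('v \<Rightarrow> complex) \<Rightarrow> ('v \<Rightarrow> complex) \<Rightarrow> 'v \<Rightarrow> complex" where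
  "wronskian par v u x = v x * u (par x) - u x * v (par x)"

lemma jacobi_wronskian_flux:
  assumes "jacobi par lam beta v x = z * v x" and "jacobi par lam beta u x = z * u x"
  shows "of_real (lam x) * wronskian par v u x
       = (\<Sum>c\<in>children par x. of_real (lam c) * wronskian par v u c)"
proof -
  define Sv where "Sv = (\<Sum>c\<in>children par x. of_real (lam c) * v c)"
  define Su where "Su = (\<Sum>c\<in>children par x. of_real (lam c) * u c)"
  have "v x * jacobi par lam beta u x - u x * jacobi par lam beta v x = 0"
    using assms by simp
  hence "of_real (lam x) * wronskian par v u x = u x * Sv - v x * Su"
    unfolding jacobi_def wronskian_def Sv_def Su_def by (simp add: algebra_simps)
  also have "\<dots> = (\<Sum>c\<in>children par x. of_real (lam c) * wronskian par v u c)"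
    unfolding Sv_def Su_def wronskian_def children_def
    by (simp add: sum_distrib_left sum_subtractf[symmetric] algebra_simps)
  finally show ?thesis .
qed

lemma wronskian_eq_0_outside_par_closed:
  fixes lev :: "'v \<Rightarrow> nat"
  assumes lev_par: "\<And>x. lev (par x) = lev x + 1"
    and closed: "par ` A \<subseteq> A"
    and lam_nz: "\<And>x. lam x \<noteq> 0"
    and v_eq: "\<And>x. x \<notin> A \<Longrightarrow> jacobi par lam beta v x = z * v x"
    and u_eq: "\<And>x. x \<notin> A \<Longrightarrow> jacobi par lam beta u x = z * u x"
    and "x \<notin> A"
  shows "wronskian par v u x = 0"
  using \<open>x \<notin> A\<close>
proof (induction "lev x" arbitrary: x rule: less_induct)
  case less
  have "of_real (lam x) * wronskian par v u x
      = (\<Sum>c\<in>children par x. of_real (lam c) * wronskian par v u c)"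
    using less.prems by (intro jacobi_wronskian_flux[of par lam beta v x z u] v_eq u_eq)
  also have "\<dots> = 0"
  proof (intro sum.neutral ballI)
    fix c assume "c \<in> children par x"
    hence "par c = x" by (simp add: children_def)
    hence "c \<notin> A" and "lev c < lev x"
      using closed less.prems lev_par[of c] by auto
    thus "of_real (lam c) * wronskian par v u c = 0" using less.hyps by simp
  qed
  finally show ?case using lam_nz[of x] by simp
qed

lemma wronskian_flux_single_child:
  assumes "jacobi par lam beta v x = z * v x" and "jacobi par lam beta u x = z * u x"
    and "finite (children par x)" and "par c = x"
    and others: "\<And>c'. par c' = x \<Longrightarrow> c' \<noteq> c \<Longrightarrow> wronskian par v u c' = 0"
  shows "of_real (lam x) * wronskian par v u x = of_real (lam c) * wronskian par v u c"
proof -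
  have "of_real (lam x) * wronskian par v u x
      = (\<Sum>c'\<in>children par x. of_real (lam c') * wronskian par v u c')"
    using assms by (intro jacobi_wronskian_flux)
  also have "\<dots> = of_real (lam c) * wronskian par v u c"
    using assms by (intro sum.remove[THEN trans] sum.neutral) (auto simp: children_def)
  finally show ?thesis .
qed

lemma adjacent_level_Suc_imp_par:
  assumes "\<And>x. lev (par x) = lev x + 1" and "adjacent par x y" and "lev y = Suc (lev x)"
  shows "par x = y"
  using assms(2,3) assms(1)[of y] by (auto simp: adjacent_def)

theorem proposition4:
  fixes lev :: "'v \<Rightarrow> nat" and par :: "'v \<Rightarrow> 'v"
    and lam beta :: "'v \<Rightarrow> real" and xs :: "nat \<Rightarrow> 'v"
    and z :: complex and v u :: "'v \<Rightarrow> complex"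
  assumes tree: "level_tree lev par"
    and lam_pos: "\<And>x. lam x > 0"
    and path: "\<And>n. adjacent par (xs n) (xs (Suc n))"
    and path_lev: "\<And>n. lev (xs n) = n"
    and nonreal: "Im z \<noteq> 0"
    and v0: "v (xs 0) = 1"
    and v1: "v (xs 1) = (z - of_real (beta (xs 0))) / of_real (lam (xs 0))"
    and u0: "u (xs 0) = 0"
    and u1: "u (xs 1) = 1 / of_real (lam (xs 0))"
    and v_eq: "\<And>x. x \<noteq> xs 0 \<Longrightarrow> jacobi par lam beta v x = z * v x"
    and u_eq: "\<And>x. x \<noteq> xs 0 \<Longrightarrow> jacobi par lam beta u x = z * u x"
  shows "\<forall>n. v (xs n) * u (xs (Suc n)) - u (xs n) * v (xs (Suc n)) = 1 / of_real (lam (xs n))"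
proof -
  have lev_par: "\<And>x. lev (par x) = lev x + 1"
    and fin: "\<And>x. lev x \<ge> 1 \<Longrightarrow> finite (children par x)"
    using tree by (auto simp: level_tree_def)
  have par_xs: "par (xs n) = xs (Suc n)" for n
    using adjacent_level_Suc_imp_par[of lev par, OF lev_par path] path_lev by simp
  have lam_nz: "\<And>x. lam x \<noteq> 0" using lam_pos by (metis less_irrefl)
  have off_path: "wronskian par v u c = 0" if "c \<notin> range xs" for c
    using that by (intro wronskian_eq_0_outside_par_closed[of lev par "range xs" lam beta v z u, OF lev_par _ lam_nz])
      (auto simp: par_xs intro: v_eq u_eq)
  have "of_real (lam (xs n)) * wronskian par v u (xs n) = 1" for n
  proof (induction n)
    case 0
    show ?case using v0 u0 u1 lam_nz[of "xs 0"] by (simp add: wronskian_def par_xs)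
  next
    case (Suc n)
    have "xs (Suc n) \<noteq> xs 0" using path_lev by (metis nat.simps(3))
    moreover have "c \<notin> range xs" if "par c = xs (Suc n)" "c \<noteq> xs n" for c
      using that path_lev lev_par[of c] by (metis Suc_eq_plus1 nat.inject rangeE)
    ultimately show ?case
      using Suc.IH wronskian_flux_single_child[OF v_eq u_eq fin, of "xs (Suc n)" "xs n"]
      by (simp add: off_path par_xs path_lev)
  qed
  thus ?thesis using lam_nz by (simp add: wronskian_def par_xs field_simps)
qed

end
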